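(* Let $n\ge3$ and $\ell\ge1$, and let $c$ be an SR state on $K_n^{(\ell)}$. Let $k_1,k_2,k_3\in\{1,\dots,n\}$ be distinct, and suppose there is an orientation $\mathcal{O}$ of the complete graph $K_n$ on $\{1,\dots,n\}$ with $c_i\ge\mathrm{in}^{\mathcal{O}}_i$ for all $i\in\{1,\dots,n\}$ such that $k_1\to k_2$, $k_2\to k_3$ and $k_1\to k_3$ in $\mathcal{O}$. Then there exists a finite sequence of grain additions and topplings on $K_n^{(\ell)}$ leading from $c^{\max}$ to $c$ in which every toppling of $k_1$, $k_2$ or $k_3$ is deterministic, and in which the last topplings of these three vertices occur in the order $k_3$, then $k_2$, then $k_1$ ($k_3$ possibly never toppling).
   Context: For $n\ge3,\ell\ge1$, $K_n^{(\ell)}$ is the multigraph on vertex set $\{0,1,\dots,n\}$ with one edge between each pair of distinct vertices of $\{1,\dots,n\}$ and $\ell$ parallel edges between each $k\in\{1,\dots,n\}$ and the sink $0$; so every non-sink vertex has degree $n-1+\ell$. A configuration is $c\in\mathbb{Z}_{\ge0}^n$, stable if $c_i<n-1+\ell$ for all $i$; $c^{\max}=(n-2+\ell,\dots,n-2+\ell)$. A toppling of a vertex $i$ with $c_i\ge n-1+\ell$ moves one grain from $i$ along each edge of some sub-multiset of the edges incident to $i$ to the other endpoint (grains reaching the sink disappear); it is deterministic if that sub-multiset consists of all incident edges. A sequence of grain additions and topplings is a finite sequence of operations, each either adding one grain at a vertex of $\{1,\dots,n\}$ or toppling a currently unstable vertex. In the SSM with parameter $p\in(0,1)$, an unstable vertex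 topples by sending, independently for each incident edge, one grain along it with probability $p$; the SSM Markov chain on stable configurations adds a grain at vertex $i$ with probability $\mu_i>0$ and stabilises, and SR states are its recurrent states (equivalently, stable configurations reachable from $c^{\max}$ by a sequence of grain additions and topplings). $\mathrm{in}^{\mathcal{O}}_i$ denotes the in-degree of $i$ in $\mathcal{O}$, and $x\to y$ means the edge $\{x,y\}$ is directed from $x$ to $y$. *)

theory Defs
  imports Main
begin

text \<open>Sandpile model on K_n^(l): non-sink vertices 1..n, sink 0.
  Configurations are functions nat => nat, meaningful on {1..n}.\<close>

datatype sp_op =
    Add nat
  | Topple nat "nat set" nat
    \<comment> \<open>Topple i S s: vertex i sends one grain to each j in S (S a subset of the
        non-sink neighbours of i) and one grain along each of s of the l sink edges\<close>

definition config :: "nat \<Rightarrow> (nat \<Rightarrow> nat) \<Rightarrow> bool" where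
  "config n c \<longleftrightarrow> (\<forall>i. i \<notin> {1..n} \<longrightarrow> c i = 0)"

definition stable :: "nat \<Rightarrow> nat \<Rightarrow> (nat \<Rightarrow> nat) \<Rightarrow> bool" where
  "stable n l c \<longleftrightarrow> (\<forall>i\<in>{1..n}. c i < n - 1 + l)"

definition cmax :: "nat \<Rightarrow> nat \<Rightarrow> (nat \<Rightarrow> nat)" where
  "cmax n l = (\<lambda>i. if i \<in> {1..n} then n - 2 + l else 0)"

definition valid_op :: "nat \<Rightarrow> nat \<Rightarrow> (nat \<Rightarrow> nat) \<Rightarrow> sp_op \<Rightarrow> bool" where
  "valid_op n l c op = (case op of
      Add i \<Rightarrow> i \<in> {1..n}
    | Topple i S s \<Rightarrow> i \<in> {1..n} \<and> c i \<ge> n - 1 + l \<and> S \<subseteq> {1..n} - {i} \<and> s \<le> l)"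

definition apply_op :: "(nat \<Rightarrow> nat) \<Rightarrow> sp_op \<Rightarrow> (nat \<Rightarrow> nat)" where
  "apply_op c op = (case op of
      Add i \<Rightarrow> c(i := c i + 1)
    | Topple i S s \<Rightarrow> (\<lambda>j. if j = i then c i - (card S + s)
                             else if j \<in> S then c j + 1 else c j))"

fun run :: "nat \<Rightarrow> nat \<Rightarrow> (nat \<Rightarrow> nat) \<Rightarrow> sp_op list \<Rightarrow> (nat \<Rightarrow> nat) option" where
  "run n l c [] = Some c"
| "run n l c (op # ops) = (if valid_op n l c op then run n l (apply_op c op) ops else None)"

definition deterministic_op :: "nat \<Rightarrow> nat \<Rightarrow> sp_op \<Rightarrow> bool" where
  "deterministic_op n l op = (case op of
      Add i \<Rightarrow> True
    | Topple i S s \<Rightarrow> S = {1..n} - {i} \<and> s = l)"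

definition topples_at :: "sp_op list \<Rightarrow> nat \<Rightarrow> nat \<Rightarrow> bool" where
  "topples_at ops j k \<longleftrightarrow> j < length ops \<and> (\<exists>S s. ops ! j = Topple k S s)"

text \<open>SR states: stable configurations reachable from cmax by grain additions and
  topplings (the equivalent characterisation of recurrent states of the SSM chain).\<close>
definition SR :: "nat \<Rightarrow> nat \<Rightarrow> (nat \<Rightarrow> nat) \<Rightarrow> bool" where
  "SR n l c \<longleftrightarrow> config n c \<and> stable n l c \<and> (\<exists>ops. run n l (cmax n l) ops = Some c)"

text \<open>Orientation of the complete graph on {1..n}: Ori i j means i -> j.\<close>
definition orientation :: "nat \<Rightarrow> (nat \<Rightarrow> nat \<Rightarrow> bool) \<Rightarrow> bool" where
  "orientation n Ori \<longleftrightarrow>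
     (\<forall>i j. Ori i j \<longrightarrow> i \<in> {1..n} \<and> j \<in> {1..n} \<and> i \<noteq> j) \<and>
     (\<forall>i\<in>{1..n}. \<forall>j\<in>{1..n}. i \<noteq> j \<longrightarrow> (Ori i j \<or> Ori j i) \<and> \<not> (Ori i j \<and> Ori j i))"

definition indeg :: "nat \<Rightarrow> (nat \<Rightarrow> nat \<Rightarrow> bool) \<Rightarrow> nat \<Rightarrow> nat" where
  "indeg n Ori i = card {j \<in> {1..n}. Ori j i}"

end

theory Submission
  imports Defs
begin

text \<open>Order the vertices as p = k3, k2, k1, followed by the others. A round along p charges each
  vertex in turn up to the threshold n - 1 + l and topples it, sending one grain to every later
  vertex of p, one grain to each earlier vertex selected by a relation R, and l grains to the sink.
  If R relates everything the round is deterministic, and it lowers the value at the i-th vertex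
  by l as long as that value exceeds the staircase n - 1 - i; so n such rounds bring c^max below the
  staircase. A final round with R = O then leaves exactly in^O at every vertex z = p_i: charged to
  the threshold, z keeps after its toppling the i - out-degree-towards-predecessors grains that
  count its earlier in-neighbours, and then receives one grain from each later in-neighbour.
  Adding grains up to c finishes. In the O-round each of k3, k2, k1 points to all its predecessors
  (this is where the transitive triangle is used), so these topplings are deterministic, and they
  are the last ones of these three vertices. Of the SR hypothesis only the fact that c vanishes off
  {1..n} is needed.\<close>

lemma run_append:
  "run n l c (xs @ ys) = (case run n l c xs of None \<Rightarrow> None | Some d \<Rightarrow> run n l d ys)"
  by (induction xs arbitrary: c) auto

lemma run_append_Some:
  "run n l c xs = Some d \<Longrightarrow> run n l c (xs @ ys) = run n l d ys"
  by (simp add: run_append)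

lemma run_replicate_Add:
  "x \<in> {1..n} \<Longrightarrow> run n l c (replicate k (Add x)) = Some (c(x := c x + k))"
  by (induction k arbitrary: c) (auto simp: valid_op_def apply_op_def)

lemma run_Adds:
  assumes "distinct xs" "set xs \<subseteq> {1..n}"
  shows "run n l c (concat (map (\<lambda>x. replicate (g x) (Add x)) xs))
           = Some (\<lambda>z. if z \<in> set xs then c z + g z else c z)"
  using assms
proof (induction xs arbitrary: c)
  case (Cons x xs)
  then have "x \<in> {1..n}" by simp
  then show ?case
    using Cons by (auto simp: run_append_Some[OF run_replicate_Add] fun_eq_iff)
qed simp

lemma run_Adds_up_to:
  assumes "\<forall>z. c z \<le> d z" and "\<forall>z. z \<notin> {1..n} \<longrightarrow> c z = d z"
  shows "\<exists>ops. run n l c ops = Some d \<and> (\<forall>op\<in>set ops. \<exists>x. op = Add x)"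
proof -
  let ?ops = "concat (map (\<lambda>x. replicate (d x - c x) (Add x)) [1..<n+1])"
  have "run n l c ?ops = Some (\<lambda>z. if z \<in> set [1..<n+1] then c z + (d z - c z) else c z)"
    by (rule run_Adds) auto
  also have "(\<lambda>z. if z \<in> set [1..<n+1] then c z + (d z - c z) else c z) = d"
    using assms by (force simp: fun_eq_iff)
  finally show ?thesis by (intro exI[of _ ?ops]) auto
qed

abbreviation round_targets :: "(nat \<Rightarrow> nat \<Rightarrow> bool) \<Rightarrow> nat set \<Rightarrow> nat \<Rightarrow> nat list \<Rightarrow> nat set" where
  "round_targets R E x xs \<equiv> set xs \<union> {w \<in> E. R x w}"

definition charge_topple :: "nat \<Rightarrow> nat \<Rightarrow> (nat \<Rightarrow> nat) \<Rightarrow> nat \<Rightarrow> nat set \<Rightarrow> nat \<Rightarrow> nat" where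
  "charge_topple n l c x S = apply_op (c(x := max (c x) (n - 1 + l))) (Topple x S l)"

text \<open>E collects the vertices already toppled in the current round.\<close>

fun round_ops ::
  "nat \<Rightarrow> nat \<Rightarrow> (nat \<Rightarrow> nat \<Rightarrow> bool) \<Rightarrow> nat set \<Rightarrow> (nat \<Rightarrow> nat) \<Rightarrow> nat list \<Rightarrow> sp_op list" where
  "round_ops n l R E c [] = []"
| "round_ops n l R E c (x # xs) =
     replicate (n - 1 + l - c x) (Add x) @ Topple x (round_targets R E x xs) l #
     round_ops n l R (insert x E) (charge_topple n l c x (round_targets R E x xs)) xs"

fun round_result ::
  "nat \<Rightarrow> nat \<Rightarrow> (nat \<Rightarrow> nat \<Rightarrow> bool) \<Rightarrow> nat set \<Rightarrow> (nat \<Rightarrow> nat) \<Rightarrow> nat list \<Rightarrow> nat \<Rightarrow> nat" where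
  "round_result n l R E c [] = c"
| "round_result n l R E c (x # xs) =
     round_result n l R (insert x E) (charge_topple n l c x (round_targets R E x xs)) xs"

lemma run_round_ops:
  assumes "distinct xs" "set xs \<subseteq> {1..n}" "E \<subseteq> {1..n}" "E \<inter> set xs = {}"
  shows "run n l c (round_ops n l R E c xs) = Some (round_result n l R E c xs)"
  using assms
proof (induction xs arbitrary: E c)
  case (Cons x xs)
  let ?S = "round_targets R E x xs"
  have x: "x \<in> {1..n}" using Cons.prems by auto
  let ?c1 = "c(x := max (c x) (n - 1 + l))"
  have charged: "c(x := c x + (n - 1 + l - c x)) = ?c1"
    by (auto simp: max_def)
  have "run n l c (round_ops n l R E c (x # xs))
      = run n l ?c1 (Topple x ?S l # round_ops n l R (insert x E) (charge_topple n l c x ?S) xs)"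
    by (simp only: round_ops.simps run_append_Some[OF run_replicate_Add[OF x]] charged)
  moreover have "valid_op n l ?c1 (Topple x ?S l)"
    using Cons.prems by (auto simp: valid_op_def)
  ultimately show ?case
    using Cons by (simp add: charge_topple_def)
qed simp

lemma round_result_outside:
  assumes "distinct xs" "E \<inter> set xs = {}" "z \<notin> set xs"
  shows "round_result n l R E c xs z = (if z \<in> E then c z + card {y \<in> set xs. R y z} else c z)"
  using assms
proof (induction xs arbitrary: E c)
  case (Cons x xs)
  let ?c' = "charge_topple n l c x (round_targets R E x xs)"
  have "x \<noteq> z" "x \<notin> set xs" using Cons.prems by auto
  then have "?c' z = (if z \<in> E \<and> R x z then c z + 1 else c z)"
    using Cons.prems by (auto simp: charge_topple_def apply_op_def)
  moreover have "{y \<in> set (x # xs). R y z}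
      = (if R x z then insert x {y \<in> set xs. R y z} else {y \<in> set xs. R y z})"
    by auto
  ultimately show ?case
    using Cons \<open>x \<notin> set xs\<close> by auto
qed simp

lemma round_result_nth:
  assumes "distinct xs" "finite E" "E \<inter> set xs = {}" "i < length xs"
  shows "round_result n l R E c xs (xs ! i)
           = max (c (xs ! i) + i) (n - 1 + l) - (length xs - Suc i)
             - card {w \<in> E \<union> set (take i xs). R (xs ! i) w} - l
             + card {y \<in> set (drop (Suc i) xs). R y (xs ! i)}"
  using assms
proof (induction xs arbitrary: E c i)
  case (Cons x xs)
  let ?S = "round_targets R E x xs"
  let ?c' = "charge_topple n l c x ?S"
  show ?case
  proof (cases i)
    case 0
    have "card ?S = length xs + card {w \<in> E. R x w}"
      using Cons.prems by (subst card_Un_disjoint) (auto simp: distinct_card)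
    then have "?c' x = max (c x) (n - 1 + l) - length xs - card {w \<in> E. R x w} - l"
      by (simp add: charge_topple_def apply_op_def)
    moreover have "round_result n l R (insert x E) ?c' xs x = ?c' x + card {y \<in> set xs. R y x}"
      using Cons.prems by (subst round_result_outside) auto
    ultimately show ?thesis using 0 by simp
  next
    case (Suc j)
    then have "xs ! j \<in> set xs" "xs ! j \<noteq> x" using Cons.prems by auto
    then have "?c' (xs ! j) = c (xs ! j) + 1"
      by (simp add: charge_topple_def apply_op_def)
    then show ?thesis
      using Cons.prems Suc by (simp add: Cons.IH)
  qed
qed simp

lemma round_ops_Topple:
  assumes "Topple x S s \<in> set (round_ops n l R E c xs)"
  shows "\<exists>ys zs. xs = ys @ x # zs \<and> S = set zs \<union> {w \<in> E \<union> set ys. R x w} \<and> s = l"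
  using assms
proof (induction xs arbitrary: E c)
  case (Cons y xs)
  show ?case
  proof (cases "Topple x S s = Topple y (round_targets R E y xs) l")
    case True
    then show ?thesis by (intro exI[of _ "[]"] exI[of _ xs]) auto
  next
    case False
    then have "Topple x S s \<in> set (round_ops n l R (insert y E)
                 (charge_topple n l c y (round_targets R E y xs)) xs)"
      using Cons.prems by auto
    then obtain ys zs where "xs = ys @ x # zs" "S = set zs \<union> {w \<in> insert y E \<union> set ys. R x w}" "s = l"
      using Cons.IH by blast
    then show ?thesis by (intro exI[of _ "y # ys"] exI[of _ zs]) auto
  qed
qed simp

lemma round_ops_Topple_deterministic:
  assumes "distinct (ys @ x # zs)" "set (ys @ x # zs) = {1..n}" "\<forall>w\<in>set ys. R x w"
    and "Topple x S s \<in> set (round_ops n l R {} c (ys @ x # zs))"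
  shows "deterministic_op n l (Topple x S s)"
proof -
  obtain ys' zs' where split: "ys @ x # zs = ys' @ x # zs'"
    and S: "S = set zs' \<union> {w \<in> set ys'. R x w}" and "s = l"
    using round_ops_Topple[OF assms(4)] by auto
  have "x \<notin> set ys" "x \<notin> set zs" using assms(1) by auto
  then have "ys' = ys \<and> zs' = zs"
    using split append_Cons_eq_iff[of x ys zs ys' zs'] by blast
  then have "S = set zs \<union> set ys" using S assms(3) by auto
  also have "\<dots> = {1..n} - {x}" using assms(1,2) by auto
  finally show ?thesis using \<open>s = l\<close> by (simp add: deterministic_op_def)
qed

lemma round_ops_deterministic:
  assumes "distinct p" "set p = {1..n}" "op \<in> set (round_ops n l (\<lambda>_ _. True) {} c p)"
  shows "deterministic_op n l op"
proof (cases op)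
  case (Topple x S s)
  then obtain ys zs where split: "p = ys @ x # zs"
    using round_ops_Topple assms(3) by blast
  have "deterministic_op n l (Topple x S s)"
    by (rule round_ops_Topple_deterministic[where R = "\<lambda>_ _. True" and c = c])
      (use assms Topple split in auto)
  then show ?thesis using Topple by simp
qed (simp add: deterministic_op_def)

lemma round_result_drains:
  assumes "distinct p" "set p = {1..n}" "\<forall>i<n. c (p ! i) \<le> n - 1 - i + B + l"
  shows "\<forall>i<n. round_result n l (\<lambda>_ _. True) {} c p (p ! i) \<le> n - 1 - i + B"
proof (intro allI impI)
  fix i assume i: "i < n"
  have len: "length p = n" using assms(1,2) distinct_card by fastforce
  have "round_result n l (\<lambda>_ _. True) {} c p (p ! i)
      = max (c (p ! i) + i) (n - 1 + l) - (n - Suc i) - i - l + (n - Suc i)"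
    using assms(1) i len by (simp add: round_result_nth distinct_card)
  also have "\<dots> \<le> n - 1 - i + B" using assms(3) i by (auto simp: max_def)
  finally show "round_result n l (\<lambda>_ _. True) {} c p (p ! i) \<le> n - 1 - i + B" .
qed

lemma deterministic_rounds_drain:
  assumes "distinct p" "set p = {1..n}" "\<forall>i<n. c (p ! i) \<le> n - 1 - i + l * t"
  shows "\<exists>ops d. run n l c ops = Some d \<and> (\<forall>op\<in>set ops. deterministic_op n l op)
           \<and> (\<forall>i<n. d (p ! i) \<le> n - 1 - i) \<and> (\<forall>z. z \<notin> {1..n} \<longrightarrow> d z = c z)"
  using assms(3)
proof (induction t arbitrary: c)
  case 0
  then show ?case by (intro exI[of _ "[]"]) auto
next
  case (Suc t)
  let ?ops = "round_ops n l (\<lambda>_ _. True) {} c p"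
  let ?c' = "round_result n l (\<lambda>_ _. True) {} c p"
  have "\<forall>i<n. ?c' (p ! i) \<le> n - 1 - i + l * t"
    using Suc.prems assms(1,2) by (intro round_result_drains) (auto simp: algebra_simps)
  then obtain ops d where "run n l ?c' ops = Some d" "\<forall>op\<in>set ops. deterministic_op n l op"
      "\<forall>i<n. d (p ! i) \<le> n - 1 - i" "\<forall>z. z \<notin> {1..n} \<longrightarrow> d z = ?c' z"
    using Suc.IH by blast
  moreover have "run n l c ?ops = Some ?c'"
    using assms(1,2) by (intro run_round_ops) auto
  moreover have "\<forall>op\<in>set ?ops. deterministic_op n l op"
    using assms(1,2) round_ops_deterministic by blast
  moreover have "\<forall>z. z \<notin> {1..n} \<longrightarrow> ?c' z = c z"
    using assms(1,2) by (auto simp: round_result_outside)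
  ultimately show ?case
    by (intro exI[of _ "?ops @ ops"] exI[of _ d]) (auto simp: run_append_Some)
qed

lemma orientation_card_out_in:
  assumes "orientation n Ori" "z \<in> {1..n}" "T \<subseteq> {1..n} - {z}"
  shows "card {w \<in> T. Ori z w} + card {w \<in> T. Ori w z} = card T"
proof -
  have "finite T" using assms(3) finite_subset by blast
  moreover have "{w \<in> T. Ori z w} \<inter> {w \<in> T. Ori w z} = {}"
    and "{w \<in> T. Ori z w} \<union> {w \<in> T. Ori w z} = T"
    using assms unfolding orientation_def by blast+
  ultimately show ?thesis by (metis card_Un_disjoint finite_Un)
qed

lemma indeg_split:
  assumes "orientation n Ori" "{1..n} = insert z (T \<union> D)" "T \<inter> D = {}"
  shows "indeg n Ori z = card {w \<in> T. Ori w z} + card {w \<in> D. Ori w z}"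
proof -
  have "finite T" "finite D"
    using finite_atLeastAtMost[of 1 n] unfolding assms(2) by simp_all
  then have "card ({w \<in> T. Ori w z} \<union> {w \<in> D. Ori w z})
      = card {w \<in> T. Ori w z} + card {w \<in> D. Ori w z}"
    using assms(3) by (intro card_Un_disjoint) auto
  moreover have "\<not> Ori z z"
    using assms(1) unfolding orientation_def by blast
  then have "{j \<in> {1..n}. Ori j z} = {w \<in> T. Ori w z} \<union> {w \<in> D. Ori w z}"
    unfolding assms(2) by auto
  ultimately show ?thesis
    unfolding indeg_def by simp
qed

lemma round_result_orientation:
  assumes "distinct p" "set p = {1..n}" "orientation n Ori" "\<forall>i<n. c (p ! i) \<le> n - 1 - i"
    and "z \<in> {1..n}"
  shows "round_result n l Ori {} c p z = indeg n Ori z"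
proof -
  have len: "length p = n" using assms(1,2) distinct_card by fastforce
  obtain i where i: "i < n" "p ! i = z" using assms(2,5) len by (metis in_set_conv_nth)
  let ?T = "set (take i p)" and ?D = "set (drop (Suc i) p)"
  have "p = take i p @ p ! i # drop (Suc i) p"
    using i len by (intro id_take_nth_drop) simp
  then have split: "p = take i p @ z # drop (Suc i) p"
    unfolding i(2) .
  have "distinct (take i p @ z # drop (Suc i) p)"
    using assms(1) by (simp only: split[symmetric])
  then have disj: "z \<notin> ?T" "?T \<inter> ?D = {}" by auto
  have "insert z (?T \<union> ?D) = set (take i p @ z # drop (Suc i) p)" by auto
  also have "\<dots> = {1..n}" using assms(2) by (simp only: split[symmetric])
  finally have all: "{1..n} = insert z (?T \<union> ?D)" ..
  have "card {w \<in> ?T. Ori z w} + card {w \<in> ?T. Ori w z} = i"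
  proof -
    have "?T \<subseteq> {1..n} - {z}" using all disj by auto
    then show ?thesis
      using orientation_card_out_in[OF assms(3,5)] i len assms(1) by (simp add: distinct_card)
  qed
  moreover have "round_result n l Ori {} c p z = max (c z + i) (n - 1 + l) - (n - Suc i)
       - card {w \<in> ?T. Ori z w} - l + card {w \<in> ?D. Ori w z}"
    using round_result_nth[OF assms(1), of "{}" i] i len by simp
  moreover have "max (c z + i) (n - 1 + l) = n - 1 + l" using assms(4) i by auto
  ultimately show ?thesis
    using indeg_split[OF assms(3) all disj(2)] i by simp
qed

lemma cmax_le_staircase:
  assumes "l \<ge> 1"
  shows "cmax n l z \<le> n - 1 - i + l * n"
proof -
  have "n - 2 + l \<le> l * n" if "n \<ge> 1"
  proof -
    have "n - 1 \<le> l * (n - 1)" using assms by simp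
    moreover have "l * n = l + l * (n - 1)" using that by (cases n) auto
    ultimately show ?thesis by linarith
  qed
  then show ?thesis by (auto simp: cmax_def)
qed

definition topples :: "nat \<Rightarrow> sp_op \<Rightarrow> bool" where
  "topples k op \<longleftrightarrow> (\<exists>S s. op = Topple k S s)"

lemma topples_at_append_Topple: "topples_at (A @ Topple k S s # B) (length A) k"
  by (simp add: topples_at_def)

lemma topples_at_before:
  assumes "\<forall>op\<in>set B. \<not> topples k op" "topples_at (A @ B) j k"
  shows "j < length A"
proof (rule ccontr)
  obtain S s where j: "j < length (A @ B)" "(A @ B) ! j = Topple k S s"
    using assms(2) unfolding topples_at_def by blast
  assume "\<not> j < length A"
  then have "Topple k S s \<in> set B"
    using j by (metis nth_append nth_mem add_diff_inverse_nat length_append nat_add_left_cancel_less)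
  then show False
    using assms(1) unfolding topples_def by blast
qed

lemma last_topplings_ordered:
  assumes ops: "ops = A @ Topple k2 S2 s2 # B @ Topple k1 S1 s1 # C"
    and "k1 \<noteq> k2" "k2 \<noteq> k3" "k1 \<noteq> k3"
    and B: "\<forall>op\<in>set B. \<not> topples k2 op \<and> \<not> topples k3 op"
    and C: "\<forall>op\<in>set C. \<not> topples k1 op \<and> \<not> topples k2 op \<and> \<not> topples k3 op"
  shows "\<exists>j1 j2. j2 < j1
           \<and> topples_at ops j1 k1 \<and> (\<forall>j. j1 < j \<longrightarrow> \<not> topples_at ops j k1)
           \<and> topples_at ops j2 k2 \<and> (\<forall>j. j2 < j \<longrightarrow> \<not> topples_at ops j k2)
           \<and> (\<forall>j. topples_at ops j k3 \<longrightarrow> j < j2)"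
proof (intro exI conjI allI impI)
  let ?j2 = "length A" and ?j1 = "length (A @ Topple k2 S2 s2 # B)"
  show "?j2 < ?j1" by simp
  show "topples_at ops ?j1 k1"
    using topples_at_append_Topple[of "A @ Topple k2 S2 s2 # B" k1 S1 s1 C] ops by simp
  show "topples_at ops ?j2 k2"
    using topples_at_append_Topple[of A k2 S2 s2 "B @ Topple k1 S1 s1 # C"] ops by simp
  fix j
  show "\<not> topples_at ops j k1" if "?j1 < j"
  proof
    assume "topples_at ops j k1"
    then have "topples_at ((A @ Topple k2 S2 s2 # B @ [Topple k1 S1 s1]) @ C) j k1"
      using ops by simp
    then show False
      using topples_at_before C that by fastforce
  qed
  show "\<not> topples_at ops j k2" if "?j2 < j"
  proof
    assume "topples_at ops j k2"
    then have "topples_at ((A @ [Topple k2 S2 s2]) @ B @ Topple k1 S1 s1 # C) j k2"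
      using ops by simp
    moreover have "\<forall>op\<in>set (B @ Topple k1 S1 s1 # C). \<not> topples k2 op"
      using B C \<open>k1 \<noteq> k2\<close> by (auto simp: topples_def)
    ultimately show False
      using topples_at_before that by fastforce
  qed
  show "j < ?j2" if "topples_at ops j k3"
  proof -
    have "\<forall>op\<in>set (Topple k2 S2 s2 # B @ Topple k1 S1 s1 # C). \<not> topples k3 op"
      using B C \<open>k2 \<noteq> k3\<close> \<open>k1 \<noteq> k3\<close> by (auto simp: topples_def)
    then show ?thesis
      using topples_at_before that ops by blast
  qed
qed

lemma round_ops_Topple_mem: "Topple x S s \<in> set (round_ops n l R E c xs) \<Longrightarrow> x \<in> set xs"
  using round_ops_Topple by fastforce

lemma transitive_triangle_round:
  assumes p: "p = k3 # k2 # k1 # rest" and "distinct p" "set p = {1..n}"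
    and "Ori k1 k2" "Ori k2 k3" "Ori k1 k3"
  shows "\<forall>op\<in>set (round_ops n l Ori {} c p). \<forall>i S s. op = Topple i S s \<and> i \<in> {k1, k2, k3}
           \<longrightarrow> deterministic_op n l op"
    and "\<exists>A B C S1 S2. round_ops n l Ori {} c p = A @ Topple k2 S2 l # B @ Topple k1 S1 l # C
           \<and> (\<forall>op\<in>set B. \<not> topples k2 op \<and> \<not> topples k3 op)
           \<and> (\<forall>op\<in>set C. \<not> topples k1 op \<and> \<not> topples k2 op \<and> \<not> topples k3 op)"
proof -
  have "p = [] @ k3 # k2 # k1 # rest" "p = [k3] @ k2 # k1 # rest" "p = [k3, k2] @ k1 # rest"
    using p by simp_all
  then show "\<forall>op\<in>set (round_ops n l Ori {} c p). \<forall>i S s. op = Topple i S s \<and> i \<in> {k1, k2, k3}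
           \<longrightarrow> deterministic_op n l op"
    using round_ops_Topple_deterministic assms by (metis empty_iff empty_set insertE list.set(2))
  obtain a1 a2 a3 S1 S2 S3 E c' where decomp: "round_ops n l Ori {} c p =
      replicate a3 (Add k3) @ Topple k3 S3 l # replicate a2 (Add k2) @ Topple k2 S2 l #
      replicate a1 (Add k1) @ Topple k1 S1 l # round_ops n l Ori E c' rest"
    unfolding p round_ops.simps by blast
  have "k1 \<notin> set rest" "k2 \<notin> set rest" "k3 \<notin> set rest"
    using assms(2) p by auto
  then have "\<forall>op\<in>set (round_ops n l Ori E c' rest). \<not> topples k1 op \<and> \<not> topples k2 op \<and> \<not> topples k3 op"
    unfolding topples_def using round_ops_Topple_mem by blast
  moreover have "\<forall>op\<in>set (replicate a1 (Add k1)). \<not> topples k2 op \<and> \<not> topples k3 op"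
    by (simp add: topples_def)
  ultimately show "\<exists>A B C S1 S2. round_ops n l Ori {} c p = A @ Topple k2 S2 l # B @ Topple k1 S1 l # C
           \<and> (\<forall>op\<in>set B. \<not> topples k2 op \<and> \<not> topples k3 op)
           \<and> (\<forall>op\<in>set C. \<not> topples k1 op \<and> \<not> topples k2 op \<and> \<not> topples k3 op)"
    using decomp by (intro exI[of _ "replicate a3 (Add k3) @ Topple k3 S3 l # replicate a2 (Add k2)"]
        exI[of _ "replicate a1 (Add k1)"] exI[of _ "round_ops n l Ori E c' rest"] exI[of _ S1] exI[of _ S2])
      simp
qed

theorem lemma5p5:
  fixes n l :: nat and c :: "nat \<Rightarrow> nat" and k1 k2 k3 :: nat
    and Ori :: "nat \<Rightarrow> nat \<Rightarrow> bool"
  assumes "n \<ge> 3" and "l \<ge> 1"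
    and "SR n l c"
    and "k1 \<in> {1..n}" and "k2 \<in> {1..n}" and "k3 \<in> {1..n}"
    and "k1 \<noteq> k2" and "k2 \<noteq> k3" and "k1 \<noteq> k3"
    and "orientation n Ori"
    and "\<forall>i\<in>{1..n}. c i \<ge> indeg n Ori i"
    and "Ori k1 k2" and "Ori k2 k3" and "Ori k1 k3"
  shows "\<exists>ops. run n l (cmax n l) ops = Some c
           \<and> (\<forall>op\<in>set ops. \<forall>i S s. op = Topple i S s \<and> i \<in> {k1, k2, k3}
                  \<longrightarrow> deterministic_op n l op)
           \<and> (\<exists>j1 j2. j2 < j1
                 \<and> topples_at ops j1 k1 \<and> (\<forall>j. j1 < j \<longrightarrow> \<not> topples_at ops j k1)
                 \<and> topples_at ops j2 k2 \<and> (\<forall>j. j2 < j \<longrightarrow> \<not> topples_at ops j k2)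
                 \<and> (\<forall>j. topples_at ops j k3 \<longrightarrow> j < j2))"
proof -
  define p where "p = k3 # k2 # k1 # sorted_list_of_set ({1..n} - {k1, k2, k3})"
  have p: "distinct p" "set p = {1..n}"
    using assms(4-9) unfolding p_def by auto
  obtain drain q where drain: "run n l (cmax n l) drain = Some q"
      "\<forall>op\<in>set drain. deterministic_op n l op" "\<forall>i<n. q (p ! i) \<le> n - 1 - i"
      "\<forall>z. z \<notin> {1..n} \<longrightarrow> q z = cmax n l z"
    using deterministic_rounds_drain[OF p] cmax_le_staircase[OF assms(2)] by blast
  let ?round = "round_ops n l Ori {} q p" and ?d = "round_result n l Ori {} q p"
  have round: "run n l q ?round = Some ?d"
    using p by (intro run_round_ops) auto
  have outside: "\<forall>z. z \<notin> {1..n} \<longrightarrow> ?d z = c z"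
    using round_result_outside[OF p(1)] drain(4) assms(3) p(2)
    by (auto simp: SR_def config_def cmax_def)
  moreover have "\<forall>z. ?d z \<le> c z"
    using round_result_orientation[OF p assms(10) drain(3)] assms(11) outside by (metis order.refl)
  ultimately obtain adds where adds: "run n l ?d adds = Some c" "\<forall>op\<in>set adds. \<exists>x. op = Add x"
    using run_Adds_up_to by blast
  obtain A B C S1 S2 where ABC: "?round = A @ Topple k2 S2 l # B @ Topple k1 S1 l # C"
      "\<forall>op\<in>set B. \<not> topples k2 op \<and> \<not> topples k3 op"
      "\<forall>op\<in>set C. \<not> topples k1 op \<and> \<not> topples k2 op \<and> \<not> topples k3 op"
    using transitive_triangle_round(2)[OF p_def p assms(12-14)] by blast
  have ops: "drain @ ?round @ adds = (drain @ A) @ Topple k2 S2 l # B @ Topple k1 S1 l # (C @ adds)"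
    using ABC(1) by simp
  have "\<forall>op\<in>set (C @ adds). \<not> topples k1 op \<and> \<not> topples k2 op \<and> \<not> topples k3 op"
    using ABC(3) adds(2) by (auto simp: topples_def)
  note order = last_topplings_ordered[OF ops assms(7-9) ABC(2) this]
  have "run n l (cmax n l) (drain @ ?round @ adds) = Some c"
    using drain(1) round adds(1) by (simp add: run_append_Some)
  moreover have "\<forall>op\<in>set (drain @ ?round @ adds). \<forall>i S s. op = Topple i S s \<and> i \<in> {k1, k2, k3}
      \<longrightarrow> deterministic_op n l op"
    using drain(2) transitive_triangle_round(1)[OF p_def p assms(12-14)] adds(2) by auto
  ultimately show ?thesis
    using order by blast
qed

end
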